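(* Let $a_1,\ldots,a_n$ be relatively prime positive integers, $\mathcal{S}=\langle a_1,\ldots,a_n\rangle$, and let $e$ be a positive integer with $\gcd(e,a_1)=1$; put $\mathcal{S}^e=\langle a_1,ea_2,\ldots,ea_n\rangle$. Then $\Delta(\mathcal{S}^e)=e\,\Delta(\mathcal{S})$. Consequently, if $\mathcal{S}^e$ is pseudo-symmetric then $e=1$.
   Context: For a numerical semigroup $\mathcal{S}$ (a submonoid of $\mathbb{Z}_{\ge 0}$ with finite complement), the Frobenius number $g(\mathcal{S})$ is the largest integer not in $\mathcal{S}$, the genus $N(\mathcal{S})$ is the number of non-negative integers not in $\mathcal{S}$, and $\Delta(\mathcal{S})=2N(\mathcal{S})-1-g(\mathcal{S})$. $\mathcal{S}$ is pseudo-symmetric if $g(\mathcal{S})$ is even and $\mathcal{S}\cup(g(\mathcal{S})-\mathcal{S})=\mathbb{Z}\setminus\{g(\mathcal{S})/2\}$, where $g-\mathcal{S}=\{g-s: s\in\mathcal{S}\}$; it is known that this is equivalent to $\Delta(\mathcal{S})=1$. $\langle b_1,\ldots,b_t\rangle$ denotes the set of non-negative integer linear combinations of $b_1,\ldots,b_t$. *)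

theory Defs
  imports Main
begin

definition gen_sg :: "nat set \<Rightarrow> nat set" where
  "gen_sg B = {x. \<exists>c::nat \<Rightarrow> nat. x = (\<Sum>b\<in>B. c b * b)}"

text \<open>Frobenius number: largest integer not in S (equals -1 when S is all of the naturals).\<close>
definition frobenius :: "nat set \<Rightarrow> int" where
  "frobenius S = (GREATEST x::int. x \<notin> int ` S)"

definition genus :: "nat set \<Rightarrow> nat" where
  "genus S = card (UNIV - S)"

definition Delta :: "nat set \<Rightarrow> int" where
  "Delta S = 2 * int (genus S) - 1 - frobenius S"

definition pseudo_symmetric :: "nat set \<Rightarrow> bool" where
  "pseudo_symmetric S \<longleftrightarrow> even (frobenius S) \<and>
     int ` S \<union> {frobenius S - int s | s. s \<in> S} = UNIV - {frobenius S div 2}"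

end

theory Submission
  imports Defs "HOL-Number_Theory.Cong"
begin

text \<open>Work with the Ap\'ery set of \<open>S\<close> with respect to \<open>p = a\<^sub>1\<close>: for each residue
  \<open>r\<close> modulo \<open>p\<close> let \<open>w r\<close> be the least element of \<open>S\<close> congruent to \<open>r\<close>. Selmer's
  formulas \<open>N(S) = \<Sum>\<^sub>r w r div p\<close> and \<open>g(S) = max w - p\<close> give
  \<open>p \<Delta>(S) = 2 \<Sum>\<^sub>r w r - p max w\<close>. As \<open>gcd(e, p) = 1\<close>, the least element of \<open>S\<^sup>e\<close>
  congruent to \<open>e s\<close> is \<open>e w s\<close>; the residues are merely permuted, so both the sum and the
  maximum scale by \<open>e\<close>. A pseudo-symmetric semigroup has \<open>\<Delta> = 1\<close>, forcing \<open>e = 1\<close>.\<close>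

lemma gen_sg_sumI: "x = (\<Sum>b\<in>B. c b * b) \<Longrightarrow> x \<in> gen_sg B"
  unfolding gen_sg_def by blast

lemma gen_sg_add: "x \<in> gen_sg B \<Longrightarrow> y \<in> gen_sg B \<Longrightarrow> x + y \<in> gen_sg B"
proof -
  assume "x \<in> gen_sg B" "y \<in> gen_sg B"
  then obtain c d where "x = (\<Sum>b\<in>B. c b * b)" "y = (\<Sum>b\<in>B. d b * b)"
    unfolding gen_sg_def by blast
  then have "x + y = (\<Sum>b\<in>B. (c b + d b) * b)"
    by (simp add: sum.distrib algebra_simps)
  then show ?thesis
    by (rule gen_sg_sumI)
qed

lemma gen_sg_mult: "x \<in> gen_sg B \<Longrightarrow> k * x \<in> gen_sg B"
proof -
  assume "x \<in> gen_sg B"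
  then obtain c where "x = (\<Sum>b\<in>B. c b * b)"
    unfolding gen_sg_def by blast
  then have "k * x = (\<Sum>b\<in>B. (k * c b) * b)"
    by (simp add: sum_distrib_left algebra_simps)
  then show ?thesis
    by (rule gen_sg_sumI)
qed

lemma gen_sg_generator: "finite B \<Longrightarrow> b \<in> B \<Longrightarrow> b \<in> gen_sg B"
proof -
  assume "finite B" "b \<in> B"
  then have "b = (\<Sum>x\<in>B. if x = b then x else 0)"
    by simp
  also have "\<dots> = (\<Sum>x\<in>B. (if x = b then 1 else 0) * x)"
    by (rule sum.cong) auto
  finally show ?thesis
    by (rule gen_sg_sumI)
qed

lemma gen_sg_insert:
  assumes "finite B"
  shows "gen_sg (insert b B) = {k * b + t | k t. t \<in> gen_sg B}"
proof (cases "b \<in> B")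
  case True
  have "k * b + t \<in> gen_sg B" if "t \<in> gen_sg B" for k t
    using gen_sg_add[OF gen_sg_mult[OF gen_sg_generator[OF assms True]] that] .
  moreover have "x \<in> {k * b + t | k t. t \<in> gen_sg B}" if "x \<in> gen_sg B" for x
    using that by (intro CollectI exI[of _ 0] exI[of _ x]) simp
  ultimately show ?thesis
    using True by (auto simp: insert_absorb)
next
  case False
  have "x \<in> gen_sg (insert b B) \<longleftrightarrow> (\<exists>k t. t \<in> gen_sg B \<and> x = k * b + t)" for x
  proof
    assume "x \<in> gen_sg (insert b B)"
    then obtain c where "x = c b * b + (\<Sum>y\<in>B. c y * y)"
      using False assms unfolding gen_sg_def by auto
    then show "\<exists>k t. t \<in> gen_sg B \<and> x = k * b + t"
      unfolding gen_sg_def by blast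
  next
    assume "\<exists>k t. t \<in> gen_sg B \<and> x = k * b + t"
    then obtain k c where x: "x = k * b + (\<Sum>y\<in>B. c y * y)"
      unfolding gen_sg_def by blast
    have "(\<Sum>y\<in>B. c y * y) = (\<Sum>y\<in>B. (c(b := k)) y * y)"
      using False by (intro sum.cong) auto
    with x False assms have "x = (\<Sum>y\<in>insert b B. (c(b := k)) y * y)"
      by simp
    then show "x \<in> gen_sg (insert b B)"
      by (rule gen_sg_sumI)
  qed
  then show ?thesis
    by blast
qed

lemma gen_sg_image_mult:
  assumes "finite B" "e > 0"
  shows "gen_sg ((*) e ` B) = (*) e ` gen_sg B"
proof -
  have inj: "inj_on ((*) e) B"
    using assms by (auto simp: inj_on_def)
  have sum_eq: "(\<Sum>y\<in>(*) e ` B. c y * y) = e * (\<Sum>b\<in>B. c (e * b) * b)" for c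
    by (simp add: sum.reindex[OF inj] sum_distrib_left mult.left_commute)
  show ?thesis
  proof
    show "gen_sg ((*) e ` B) \<subseteq> (*) e ` gen_sg B"
    proof
      fix x
      assume "x \<in> gen_sg ((*) e ` B)"
      then obtain c where "x = e * (\<Sum>b\<in>B. c (e * b) * b)"
        unfolding gen_sg_def sum_eq by blast
      moreover have "(\<Sum>b\<in>B. c (e * b) * b) \<in> gen_sg B"
        by (rule gen_sg_sumI[OF refl])
      ultimately show "x \<in> (*) e ` gen_sg B"
        by blast
    qed
  next
    show "(*) e ` gen_sg B \<subseteq> gen_sg ((*) e ` B)"
    proof
      fix x
      assume "x \<in> (*) e ` gen_sg B"
      then obtain d where "x = e * (\<Sum>b\<in>B. d b * b)"
        unfolding gen_sg_def by blast
      also have "\<dots> = (\<Sum>y\<in>(*) e ` B. d (y div e) * y)"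
        using assms(2) by (simp add: sum_eq)
      finally show "x \<in> gen_sg ((*) e ` B)"
        by (rule gen_sg_sumI)
    qed
  qed
qed

lemma Gcd_int_combination:
  fixes B :: "nat set"
  assumes "finite B"
  shows "\<exists>c::nat \<Rightarrow> int. (\<Sum>b\<in>B. c b * int b) = int (Gcd B)"
  using assms
proof (induction B rule: finite_induct)
  case empty
  then show ?case
    by simp
next
  case (insert x F)
  then obtain c where c: "(\<Sum>b\<in>F. c b * int b) = int (Gcd F)"
    by blast
  obtain u v where uv: "u * int x + v * int (Gcd F) = gcd (int x) (int (Gcd F))"
    using bezout_int by blast
  define c' where "c' = (\<lambda>y. if y = x then u else v * c y)"
  have "(\<Sum>b\<in>F. c' b * int b) = v * (\<Sum>b\<in>F. c b * int b)"
    using insert by (auto simp: c'_def sum_distrib_left intro!: sum.cong)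
  then have "(\<Sum>b\<in>insert x F. c' b * int b) = u * int x + v * int (Gcd F)"
    using insert c by (simp add: c'_def)
  with uv show ?case
    by auto
qed

lemma gen_sg_meets_residue:
  assumes "finite B" "p > 0" "Gcd (insert p B) = 1"
  shows "\<exists>t\<in>gen_sg B. t mod p = r mod p"
proof -
  obtain c :: "nat \<Rightarrow> int" where c: "(\<Sum>b\<in>insert p B. c b * int b) = 1"
    using Gcd_int_combination[of "insert p B"] assms by auto
  have cB: "(\<Sum>b\<in>B. c b * int b) mod int p = 1 mod int p"
  proof (cases "p \<in> B")
    case True
    then show ?thesis
      using c by (simp add: insert_absorb)
  next
    case False
    then have "c p * int p + (\<Sum>b\<in>B. c b * int b) = 1"
      using c assms(1) by simp
    then show ?thesis
      by (metis mod_mult_self3)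
  qed
  \<comment> \<open>reduce the B\'ezout coefficients modulo \<open>p\<close> to get an element of \<open>gen_sg B\<close> congruent to 1\<close>
  define t where "t = (\<Sum>b\<in>B. nat (c b mod int p) * b)"
  have "t \<in> gen_sg B"
    unfolding t_def by (rule gen_sg_sumI[OF refl])
  have "int t mod int p = (\<Sum>b\<in>B. (c b mod int p) * int b) mod int p"
    unfolding t_def using assms(2) by simp
  also have "\<dots> = (\<Sum>b\<in>B. ((c b mod int p) * int b) mod int p) mod int p"
    by (simp only: mod_sum_eq)
  also have "\<dots> = (\<Sum>b\<in>B. (c b * int b) mod int p) mod int p"
    by (simp only: mod_mult_left_eq)
  also have "\<dots> = 1 mod int p"
    using cB by (simp only: mod_sum_eq)
  finally have "t mod p = 1 mod p"
    by (metis of_nat_1 of_nat_eq_iff zmod_int)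
  have "(r * t) mod p = (r * (t mod p)) mod p"
    by (simp add: mod_mult_right_eq)
  also have "\<dots> = (r * 1) mod p"
    using \<open>t mod p = 1 mod p\<close> by (metis mod_mult_right_eq)
  finally have "(r * t) mod p = r mod p"
    by simp
  then show ?thesis
    using gen_sg_mult[OF \<open>t \<in> gen_sg B\<close>] by blast
qed

lemma frobenius_eqI:
  assumes "y \<ge> -1" "y \<notin> int ` S" "\<And>x. y < int x \<Longrightarrow> x \<in> S"
  shows "frobenius S = y"
  unfolding frobenius_def
proof (rule Greatest_equality)
  fix z
  assume z: "z \<notin> int ` S"
  show "z \<le> y"
  proof (rule ccontr)
    assume "\<not> z \<le> y"
    then have "y < z" "z \<ge> 0"
      using assms(1) by simp_all
    then obtain x where "z = int x" "y < int x"
      using nonneg_int_cases by metis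
    then show False
      using assms(3) z by blast
  qed
qed (fact assms(2))

lemma frobenius_finite_complement:
  assumes "finite (UNIV - S)"
  shows "frobenius S \<ge> -1" and "frobenius S \<notin> int ` S" and "x \<notin> S \<Longrightarrow> int x \<le> frobenius S"
proof -
  have "\<exists>y. y \<ge> -1 \<and> y \<notin> int ` S \<and> (\<forall>x. x \<notin> S \<longrightarrow> int x \<le> y)"
  proof (cases "S = UNIV")
    case True
    then show ?thesis
      by (intro exI[of _ "-1"]) auto
  next
    case False
    then have "Max (UNIV - S) \<in> UNIV - S"
      using Max_in[OF assms] by blast
    then show ?thesis
      using Max_ge[OF assms] by (intro exI[of _ "int (Max (UNIV - S))"]) auto
  qed
  then obtain y where y: "y \<ge> -1" "y \<notin> int ` S" "\<And>x. x \<notin> S \<Longrightarrow> int x \<le> y"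
    by blast
  have "frobenius S = y"
    using y by (intro frobenius_eqI) force+
  with y show "frobenius S \<ge> -1" "frobenius S \<notin> int ` S" "x \<notin> S \<Longrightarrow> int x \<le> frobenius S"
    by simp_all
qed

text \<open>For \<open>g = frobenius S\<close> even, \<open>x \<mapsto> g - x\<close> maps the gaps other than \<open>g/2\<close>
  bijectively onto the elements of \<open>S\<close> below \<open>g\<close>; counting \<open>{0..g}\<close> gives \<open>g + 2 = 2 N(S)\<close>.\<close>

lemma pseudo_symmetric_imp_Delta_eq_1:
  assumes add: "\<And>x y. x \<in> S \<Longrightarrow> y \<in> S \<Longrightarrow> x + y \<in> S"
    and fin: "finite (UNIV - S)"
    and ps: "pseudo_symmetric S"
  shows "Delta S = 1"
proof -
  define g where "g = frobenius S"
  have ev: "even g" and sym: "int ` S \<union> {g - int s | s. s \<in> S} = UNIV - {g div 2}"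
    using ps unfolding pseudo_symmetric_def g_def by auto
  have "g \<ge> 0"
    using ev frobenius_finite_complement(1)[OF fin] unfolding g_def by presburger
  then obtain G where gG: "g = int G"
    using nonneg_int_cases by blast
  define h where "h = G div 2"
  have hG: "int h = g div 2"
    using gG h_def ev by (simp add: zdiv_int)
  have G_gap: "G \<notin> S"
    using frobenius_finite_complement(2)[OF fin] gG unfolding g_def by blast
  have gaps: "UNIV - S \<subseteq> {..G}"
    using frobenius_finite_complement(3)[OF fin] gG unfolding g_def by force
  have h_gap: "h \<notin> S"
    using sym hG by blast
  have reflect_gap: "G - x \<in> S" if x: "x \<le> G" "x \<noteq> h" "x \<notin> S" for x
  proof -
    have "int x \<in> int ` S \<union> {g - int s | s. s \<in> S}"
      using sym x(2) hG by auto
    then obtain s where "s \<in> S" "int x = g - int s"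
      using x(3) by auto
    then show ?thesis
      using gG by (metis add_diff_cancel_left' nat_int of_nat_add eq_diff_eq)
  qed
  have reflect_elem: "G - y \<notin> S" if "y \<le> G" "y \<in> S" for y
    using add[OF that(2)] that G_gap by (metis le_add_diff_inverse)
  have bij: "bij_betw (\<lambda>x. G - x) ((UNIV - S) - {h}) (S \<inter> {..G})"
  proof (rule bij_betw_byWitness[where f'="\<lambda>x. G - x"])
    show "(\<lambda>x. G - x) ` (S \<inter> {..G}) \<subseteq> (UNIV - S) - {h}"
    proof
      fix z
      assume "z \<in> (\<lambda>x. G - x) ` (S \<inter> {..G})"
      then obtain y where y: "y \<in> S" "y \<le> G" "z = G - y"
        by auto
      obtain k where "G = 2 * k"
        using ev gG by (auto elim: evenE)
      then have "z = h \<longrightarrow> y = h"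
        using y unfolding h_def by auto
      then have "z \<noteq> h"
        using y h_gap by auto
      then show "z \<in> (UNIV - S) - {h}"
        using reflect_elem y by simp
    qed
  qed (use gaps reflect_gap in auto)
  then have below: "card (S \<inter> {..G}) = genus S - 1"
    using fin h_gap bij_betw_same_card unfolding genus_def by fastforce
  have "{..G} = (UNIV - S) \<union> (S \<inter> {..G})"
    using gaps by auto
  then have "card {..G} = card ((UNIV - S) \<union> (S \<inter> {..G}))"
    by (rule arg_cong)
  also have "\<dots> = card (UNIV - S) + card (S \<inter> {..G})"
    using fin by (intro card_Un_disjoint) auto
  finally have "G + 1 = genus S + (genus S - 1)"
    using below unfolding genus_def by simp
  moreover have "genus S \<ge> 1"
    using fin h_gap unfolding genus_def by (metis One_nat_def Suc_leI card_gt_0_iff empty_iff DiffI UNIV_I)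
  ultimately have "int G + 2 = 2 * int (genus S)"
    by linarith
  then show ?thesis
    unfolding Delta_def using gG g_def by linarith
qed

text \<open>\<open>w r\<close> is the least element of \<open>S\<close> congruent to \<open>r\<close>, so \<open>w ` {..<p}\<close> is the
  Ap\'ery set of \<open>S\<close> with respect to \<open>p\<close>.\<close>

definition apery_fun :: "nat set \<Rightarrow> nat \<Rightarrow> (nat \<Rightarrow> nat) \<Rightarrow> bool" where
  "apery_fun S p w \<longleftrightarrow> p > 0 \<and> (\<forall>r<p. w r mod p = r) \<and> (\<forall>x. x \<in> S \<longleftrightarrow> w (x mod p) \<le> x)"

definition min_in_class :: "nat set \<Rightarrow> nat \<Rightarrow> nat \<Rightarrow> nat" where
  "min_in_class T p r = (LEAST t. t \<in> T \<and> t mod p = r)"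

lemma apery_fun_min_in_class:
  assumes "p > 0" and meets: "\<And>r. r < p \<Longrightarrow> \<exists>t\<in>T. t mod p = r"
  shows "apery_fun {k * p + t | k t. t \<in> T} p (min_in_class T p)"
proof -
  let ?w = "min_in_class T p"
  have w: "?w r \<in> T" "?w r mod p = r" if "r < p" for r
    using LeastI_ex[OF meets[OF that, unfolded Bex_def]] unfolding min_in_class_def by auto
  have w_le: "?w r \<le> t" if "t \<in> T" "t mod p = r" for r t
    unfolding min_in_class_def using that by (simp add: Least_le)
  have "x \<in> {k * p + t | k t. t \<in> T} \<longleftrightarrow> ?w (x mod p) \<le> x" for x
  proof
    assume "x \<in> {k * p + t | k t. t \<in> T}"
    then obtain k t where "t \<in> T" "x = k * p + t"
      by blast
    then show "?w (x mod p) \<le> x"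
      using w_le[of t "x mod p"] by simp
  next
    assume le: "?w (x mod p) \<le> x"
    have "x mod p < p"
      using assms(1) by simp
    then have "x mod p = ?w (x mod p) mod p"
      using w(2) by simp
    then have "p dvd x - ?w (x mod p)"
      using mod_eq_dvd_iff_nat[OF le] by simp
    then obtain k where "x = k * p + ?w (x mod p)"
      using le by (metis dvd_div_mult_self le_add_diff_inverse2)
    then show "x \<in> {k * p + t | k t. t \<in> T}"
      using w(1)[OF \<open>x mod p < p\<close>] by blast
  qed
  then show ?thesis
    unfolding apery_fun_def using assms(1) w(2) by blast
qed

lemma min_in_class_mult:
  assumes "coprime e p" "s < p" "\<exists>t\<in>T. t mod p = s"
  shows "min_in_class ((*) e ` T) p (e * s mod p) = e * min_in_class T p s"
proof -
  let ?m = "min_in_class T p s"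
  have m: "?m \<in> T" "?m mod p = s"
    using LeastI_ex[of "\<lambda>t. t \<in> T \<and> t mod p = s"] assms(3) unfolding min_in_class_def by auto
  have le: "e * ?m \<le> e * t" if "t \<in> T" "e * t mod p = e * s mod p" for t
  proof -
    have "t mod p = s"
      using that(2) assms(1,2) cong_mult_lcancel_nat[of e p t s] unfolding cong_def by simp
    then show ?thesis
      using that(1) unfolding min_in_class_def by (simp add: Least_le)
  qed
  show ?thesis
    unfolding min_in_class_def[of "(*) e ` T"]
  proof (rule Least_equality)
    show "e * ?m \<in> (*) e ` T \<and> e * ?m mod p = e * s mod p"
      using imageI[OF m(1)] m(2) mod_mult_right_eq[of e ?m p] by simp
  next
    fix y
    assume "y \<in> (*) e ` T \<and> y mod p = e * s mod p"
    then obtain t where "t \<in> T" "y = e * t" "e * t mod p = e * s mod p"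
      by blast
    then show "e * ?m \<le> y"
      using le by simp
  qed
qed

lemma bij_betw_mult_mod:
  fixes e p :: nat
  assumes "coprime e p"
  shows "bij_betw (\<lambda>s. e * s mod p) {..<p} {..<p}"
proof -
  have "inj_on (\<lambda>s. e * s mod p) {..<p}"
  proof (rule inj_onI)
    fix x y
    assume "x \<in> {..<p}" "y \<in> {..<p}" "e * x mod p = e * y mod p"
    then show "x = y"
      using cong_mult_lcancel_nat[OF assms, of x y] by (simp add: cong_def)
  qed
  moreover have "(\<lambda>s. e * s mod p) ` {..<p} \<subseteq> {..<p}"
    by auto
  ultimately show ?thesis
    unfolding bij_betw_def by (simp add: endo_inj_surj)
qed

lemma residues_image_mult:
  fixes e p :: nat
  assumes "coprime e p" and meets: "\<And>s. s < p \<Longrightarrow> \<exists>t\<in>T. t mod p = s" and "r < p"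
  shows "\<exists>t\<in>(*) e ` T. t mod p = r"
proof -
  have "r \<in> (\<lambda>s. e * s mod p) ` {..<p}"
    using bij_betw_mult_mod[OF assms(1)] assms(3) unfolding bij_betw_def by simp
  then obtain s where "s < p" "r = e * s mod p"
    by blast
  moreover obtain t where "t \<in> T" "t mod p = s"
    using meets[OF \<open>s < p\<close>] by blast
  ultimately have "e * t mod p = r"
    by (metis mod_mult_right_eq)
  with \<open>t \<in> T\<close> show ?thesis
    by blast
qed

lemma apery_fun_gap:
  assumes "apery_fun S p w" "x \<notin> S"
  shows "x + p \<le> w (x mod p)"
proof -
  have lt: "x < w (x mod p)" and "w (x mod p) mod p = x mod p"
    using assms unfolding apery_fun_def by auto
  then have "p dvd w (x mod p) - x"
    using mod_eq_dvd_iff_nat[of x "w (x mod p)" p] by simp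
  then have "p \<le> w (x mod p) - x"
    using lt by (intro dvd_imp_le) simp_all
  then show ?thesis
    using lt by simp
qed

lemma apery_fun_finite_complement:
  assumes "apery_fun S p w"
  shows "finite (UNIV - S)"
proof (rule finite_subset)
  show "UNIV - S \<subseteq> {..Max (w ` {..<p})}"
  proof
    fix x
    assume "x \<in> UNIV - S"
    then have "x \<le> w (x mod p)"
      using apery_fun_gap[OF assms] by force
    moreover have "x mod p < p"
      using assms unfolding apery_fun_def by simp
    ultimately show "x \<in> {..Max (w ` {..<p})}"
      by (auto intro: le_trans)
  qed
qed simp

text \<open>The gaps congruent to \<open>r\<close> are \<open>r, r + p, \<dots>, w r - p\<close>: there are \<open>w r div p\<close> of them.\<close>

lemma genus_apery_fun:
  assumes "apery_fun S p w"
  shows "genus S = (\<Sum>r<p. w r div p)"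
proof -
  have p: "p > 0" and w: "\<And>r. r < p \<Longrightarrow> w r mod p = r" and S: "\<And>x. x \<in> S \<longleftrightarrow> w (x mod p) \<le> x"
    using assms unfolding apery_fun_def by auto
  have "bij_betw (\<lambda>x. (x mod p, x div p)) (UNIV - S) (SIGMA r:{..<p}. {..<w r div p})"
  proof (rule bij_betwI')
    fix x y
    show "((x mod p, x div p) = (y mod p, y div p)) = (x = y)"
      by (metis div_mult_mod_eq prod.inject)
  next
    fix x
    assume "x \<in> UNIV - S"
    then have "(x + p) div p \<le> w (x mod p) div p"
      using apery_fun_gap[OF assms] by (simp add: div_le_mono)
    then have "x div p < w (x mod p) div p"
      using div_add_self2[of p x] p by simp
    then show "(x mod p, x div p) \<in> (SIGMA r:{..<p}. {..<w r div p})"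
      using p by simp
  next
    fix z
    assume "z \<in> (SIGMA r:{..<p}. {..<w r div p})"
    then obtain r q where z: "z = (r, q)" "r < p" "q < w r div p"
      by blast
    define x where "x = p * q + r"
    have x: "x mod p = r" "x div p = q"
      using z p unfolding x_def by auto
    have "w r = p * (w r div p) + r"
      using w[OF z(2)] by (metis div_mult_mod_eq mult.commute)
    moreover have "p * (q + 1) \<le> p * (w r div p)"
      using z(3) by (intro mult_le_mono2) simp
    ultimately have "x < w r"
      unfolding x_def using p by (simp add: algebra_simps)
    then show "\<exists>x\<in>UNIV - S. z = (x mod p, x div p)"
      using S x z by (intro bexI[of _ x]) auto
  qed
  then show ?thesis
    unfolding genus_def by (simp add: bij_betw_same_card)
qed

lemma frobenius_apery_fun:
  assumes "apery_fun S p w"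
  shows "frobenius S = int (Max (w ` {..<p})) - int p"
proof -
  have p: "p > 0" and w: "\<And>r. r < p \<Longrightarrow> w r mod p = r" and S: "\<And>x. x \<in> S \<longleftrightarrow> w (x mod p) \<le> x"
    using assms unfolding apery_fun_def by auto
  have fin: "finite (w ` {..<p})" "w ` {..<p} \<noteq> {}"
    using p by auto
  obtain r0 where r0: "r0 < p" "w r0 = Max (w ` {..<p})"
    using Max_in[OF fin] by auto
  have w_max: "w r \<le> w r0" if "r < p" for r
    using r0 Max_ge[OF fin(1)] that by simp
  show ?thesis
  proof (rule frobenius_eqI)
    have "p - 1 \<le> w (p - 1)"
      using w[of "p - 1"] p mod_less_eq_dividend[of "w (p - 1)" p] by simp
    then show "int (Max (w ` {..<p})) - int p \<ge> -1"
      using w_max[of "p - 1"] p r0 by linarith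
  next
    show "int (Max (w ` {..<p})) - int p \<notin> int ` S"
    proof
      assume "int (Max (w ` {..<p})) - int p \<in> int ` S"
      then obtain x where "x \<in> S" "x + p = w r0"
        using r0 by (auto simp: algebra_simps)
      moreover have "x mod p = r0"
        using w[OF r0(1)] \<open>x + p = w r0\<close> by (metis mod_add_self2)
      ultimately have "w r0 \<le> x"
        using S by metis
      then show False
        using \<open>x + p = w r0\<close> p by simp
    qed
  next
    fix x
    assume "int (Max (w ` {..<p})) - int p < int x"
    then show "x \<in> S"
      using apery_fun_gap[OF assms, of x] w_max[of "x mod p"] r0 p by fastforce
  qed
qed

lemma Delta_apery_fun:
  assumes "apery_fun S p w"
  shows "int p * Delta S = 2 * (\<Sum>r<p. int (w r)) - int p * int (Max (w ` {..<p}))"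
proof -
  have w: "\<And>r. r < p \<Longrightarrow> w r mod p = r"
    using assms unfolding apery_fun_def by auto
  have "int p * int (genus S) = (\<Sum>r<p. int (w r) - int r)"
    unfolding genus_apery_fun[OF assms] of_nat_sum sum_distrib_left
  proof (rule sum.cong)
    fix r
    assume "r \<in> {..<p}"
    then have "p * (w r div p) + r = w r"
      using w by (metis div_mult_mod_eq lessThan_iff mult.commute)
    then show "int p * int (w r div p) = int (w r) - int r"
      by (metis add_diff_cancel_right' of_nat_add of_nat_mult)
  qed simp
  moreover have "2 * (\<Sum>r<p. int r) = int p * (int p - 1)"
    by (induction p) (auto simp: algebra_simps)
  ultimately show ?thesis
    unfolding Delta_def frobenius_apery_fun[OF assms] by (simp add: sum_subtractf algebra_simps)
qed

lemma Delta_apery_fun_scaled: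
  assumes S: "apery_fun S p w" and S': "apery_fun S' p w'" and "coprime e p"
    and w': "\<And>s. s < p \<Longrightarrow> w' (e * s mod p) = e * w s"
  shows "Delta S' = int e * Delta S"
proof -
  have p: "p > 0"
    using S unfolding apery_fun_def by simp
  have bij: "bij_betw (\<lambda>s. e * s mod p) {..<p} {..<p}"
    using bij_betw_mult_mod[OF assms(3)] .
  have "(\<Sum>r<p. int (w' r)) = (\<Sum>s<p. int (w' (e * s mod p)))"
    using sum.reindex_bij_betw[OF bij, of "\<lambda>r. int (w' r)"] by simp
  also have "\<dots> = int e * (\<Sum>s<p. int (w s))"
    by (simp add: w' sum_distrib_left)
  finally have sum: "(\<Sum>r<p. int (w' r)) = int e * (\<Sum>s<p. int (w s))" .
  have "w' ` {..<p} = w' ` (\<lambda>s. e * s mod p) ` {..<p}"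
    using bij unfolding bij_betw_def by simp
  also have "\<dots> = (*) e ` w ` {..<p}"
    by (force simp: w' image_image)
  moreover have "Max ((*) e ` w ` {..<p}) = e * Max (w ` {..<p})"
    using p by (intro mono_Max_commute[symmetric]) (auto simp: mono_def)
  ultimately have "Max (w' ` {..<p}) = e * Max (w ` {..<p})"
    by simp
  have "int p * Delta S' = 2 * (\<Sum>r<p. int (w' r)) - int p * int (Max (w' ` {..<p}))"
    by (rule Delta_apery_fun[OF S'])
  also have "\<dots> = int e * (2 * (\<Sum>r<p. int (w r)) - int p * int (Max (w ` {..<p})))"
    using sum \<open>Max (w' ` {..<p}) = e * Max (w ` {..<p})\<close> by (simp add: algebra_simps)
  also have "\<dots> = int p * (int e * Delta S)"
    using Delta_apery_fun[OF S] by (simp add: ac_simps)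
  finally show ?thesis
    using p by simp
qed

theorem mainTheorem2:
  fixes a :: "nat \<Rightarrow> nat" and n e :: nat
  assumes "n \<ge> 1"
    and "\<forall>i\<in>{1..n}. a i > 0"
    and "Gcd (a ` {1..n}) = 1"
    and "e > 0"
    and "gcd e (a 1) = 1"
  shows "Delta (gen_sg (insert (a 1) ((\<lambda>i. e * a i) ` {2..n})))
           = int e * Delta (gen_sg (a ` {1..n}))
         \<and> (pseudo_symmetric (gen_sg (insert (a 1) ((\<lambda>i. e * a i) ` {2..n}))) \<longrightarrow> e = 1)"
proof -
  define p where "p = a 1"
  define B where "B = a ` {2..n}"
  define T where "T = gen_sg B"
  have "p > 0" "finite B" "coprime e p"
    using assms(1,2,5) unfolding p_def B_def by (auto simp: coprime_iff_gcd_eq_1)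
  have "{1..n} = insert 1 {2..n}"
    using assms(1) by auto
  then have S: "a ` {1..n} = insert p B"
    unfolding p_def B_def by simp
  have S': "insert (a 1) ((\<lambda>i. e * a i) ` {2..n}) = insert p ((*) e ` B)"
    unfolding p_def B_def by (simp add: image_image)
  have meets: "\<exists>t\<in>T. t mod p = r" if "r < p" for r
    using gen_sg_meets_residue[OF \<open>finite B\<close> \<open>p > 0\<close>, of r] assms(3) that unfolding S T_def by simp
  have ap: "apery_fun (gen_sg (a ` {1..n})) p (min_in_class T p)"
    unfolding S gen_sg_insert[OF \<open>finite B\<close>] T_def[symmetric]
    using \<open>p > 0\<close> meets by (rule apery_fun_min_in_class)
  have ap': "apery_fun (gen_sg (insert (a 1) ((\<lambda>i. e * a i) ` {2..n}))) p (min_in_class ((*) e ` T) p)"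
    unfolding S' gen_sg_insert[OF finite_imageI[OF \<open>finite B\<close>]] gen_sg_image_mult[OF \<open>finite B\<close> assms(4)] T_def[symmetric]
    using \<open>p > 0\<close> residues_image_mult[OF \<open>coprime e p\<close> meets] by (rule apery_fun_min_in_class)
  have Delta: "Delta (gen_sg (insert (a 1) ((\<lambda>i. e * a i) ` {2..n}))) = int e * Delta (gen_sg (a ` {1..n}))"
    using ap ap' \<open>coprime e p\<close> by (rule Delta_apery_fun_scaled) (rule min_in_class_mult[OF \<open>coprime e p\<close> _ meets])
  moreover have "e = 1" if "pseudo_symmetric (gen_sg (insert (a 1) ((\<lambda>i. e * a i) ` {2..n})))"
  proof -
    have "Delta (gen_sg (insert (a 1) ((\<lambda>i. e * a i) ` {2..n}))) = 1"
      using gen_sg_add apery_fun_finite_complement[OF ap'] that by (rule pseudo_symmetric_imp_Delta_eq_1)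
    then show "e = 1"
      using Delta assms(4) pos_zmult_eq_1_iff by auto
  qed
  ultimately show ?thesis
    by blast
qed

end
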